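(* Assume $v\equiv0$, $\beta>0$, $\zeta_l>0$ and $\zeta_r>0$. Then $$\mathcal{J}_\beta(N)=\frac{2(\alpha_{in}^l\alpha_{out}^r-\alpha_{out}^l\alpha_{in}^r)}{\zeta_l+\zeta_r+\zeta_l\zeta_r\big(\zeta_l+\zeta_r+\beta(N-1)\big)}.$$
   Context: Fix an integer $N\ge2$. Let $e_1,\dots,e_N$ be the standard basis of $\mathbb{C}^N$ (inner product antilinear in the first slot), $p_n=|e_n\rangle\langle e_n|$, and $h$ the Hermitian matrix $(h\psi)(n)=-\psi(n+1)-\psi(n-1)+v(n)\psi(n)$, $n=1,\dots,N$, $\psi(0)=\psi(N+1)=0$. Let $\alpha_{in}^l,\alpha_{out}^l,\alpha_{in}^r,\alpha_{out}^r,\beta\ge0$, $\zeta_l=\alpha_{in}^l+\alpha_{out}^l$, $\zeta_r=\alpha_{in}^r+\alpha_{out}^r$. Define $l(a)=-i[h,a]-\{\zeta_lp_1+\zeta_rp_N,a\}+\beta\left(\sum_{n=1}^Np_nap_n-a\right)$ on $M_N(\mathbb{C})$, $T_t=e^{tl}$, $R_\infty=\int_0^\infty T_s(2\alpha_{in}^lp_1+2\alpha_{in}^rp_N)\,ds$, and the stationary current $\mathcal{J}_\beta(N)=2\,\mathrm{Im}\langle e_2,R_\infty e_1\rangle$. *)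

theory Defs
  imports "HOL-Analysis.Analysis"
begin

text \<open>N x N complex matrices are represented as functions nat \<Rightarrow> nat \<Rightarrow> complex,
  indexed by 1..N (entries outside this range are irrelevant / zero).
  Entry (i,j) of a matrix a equals the inner product of e_i with a e_j.\<close>

type_synonym cmat = "nat \<Rightarrow> nat \<Rightarrow> complex"

definition mmul :: "nat \<Rightarrow> cmat \<Rightarrow> cmat \<Rightarrow> cmat" where
  "mmul N A B = (\<lambda>i j. \<Sum>k\<in>{1..N}. A i k * B k j)"

definition proj :: "nat \<Rightarrow> cmat" where
  "proj n = (\<lambda>i j. if i = n \<and> j = n then 1 else 0)"

definition hmat :: "nat \<Rightarrow> (nat \<Rightarrow> real) \<Rightarrow> cmat" where
  "hmat N v = (\<lambda>i j. if i \<in> {1..N} \<and> j \<in> {1..N} then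
      (if i = j then complex_of_real (v i) else 0) - (if j = i + 1 \<or> i = j + 1 then 1 else 0)
    else 0)"

definition lind :: "nat \<Rightarrow> (nat \<Rightarrow> real) \<Rightarrow> real \<Rightarrow> real \<Rightarrow> real \<Rightarrow> cmat \<Rightarrow> cmat" where
  "lind N v zl zr beta a = (\<lambda>i j. if i \<in> {1..N} \<and> j \<in> {1..N} then
      - \<i> * (mmul N (hmat N v) a i j - mmul N a (hmat N v) i j)
      - (mmul N (\<lambda>r s. of_real zl * proj 1 r s + of_real zr * proj N r s) a i j
         + mmul N a (\<lambda>r s. of_real zl * proj 1 r s + of_real zr * proj N r s) i j)
      + of_real beta * ((\<Sum>n\<in>{1..N}. mmul N (mmul N (proj n) a) (proj n) i j) - a i j)
    else 0)"

definition semigroup :: "nat \<Rightarrow> (nat \<Rightarrow> real) \<Rightarrow> real \<Rightarrow> real \<Rightarrow> real \<Rightarrow> real \<Rightarrow> cmat \<Rightarrow> cmat" where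
  "semigroup N v zl zr beta t a = (\<lambda>i j.
      \<Sum>k. complex_of_real (t ^ k / fact k) * ((lind N v zl zr beta ^^ k) a i j))"

definition Rinf :: "nat \<Rightarrow> (nat \<Rightarrow> real) \<Rightarrow> real \<Rightarrow> real \<Rightarrow> real \<Rightarrow> real \<Rightarrow> real \<Rightarrow> cmat" where
  "Rinf N v ainl aoutl ainr aoutr beta = (\<lambda>i j.
      integral {0..} (\<lambda>s. semigroup N v (ainl + aoutl) (ainr + aoutr) beta s
        (\<lambda>r c. of_real (2 * ainl) * proj 1 r c + of_real (2 * ainr) * proj N r c) i j))"

definition current :: "nat \<Rightarrow> (nat \<Rightarrow> real) \<Rightarrow> real \<Rightarrow> real \<Rightarrow> real \<Rightarrow> real \<Rightarrow> real \<Rightarrow> real" where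
  "current N v ainl aoutl ainr aoutr beta = 2 * Im (Rinf N v ainl aoutl ainr aoutr beta 2 1)"

end

theory Submission
  imports Defs
begin

(* The matrix R whose diagonal grows affinely along the chain and whose first off-diagonals
   carry the constant current c solves l(R) = -(2 alpha_in^l p_1 + 2 alpha_in^r p_N) for the
   value of c matching the right boundary. Hence d/ds T_s R = -T_s(2 alpha_in^l p_1 + 2 alpha_in^r p_N),
   and integrating over [0, S] gives R - T_S R. The Frobenius norm of T_t R does not increase,
   while dephasing dissipates it at rate at least beta |(T_t R)_21|^2; together with a bound on
   the derivative this forces (T_t R)_21 -> 0. So the (2,1) entry of R_infinity is R_21 = -i c,
   and the current is -2c. *)

section \<open>Dissipation and improper integrals on the half-line\<close>

lemma DERIV_cmod_power2:
  assumes "(f has_vector_derivative f') (at t)"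
  shows "((\<lambda>t. (cmod (f t))\<^sup>2) has_real_derivative 2 * Re (cnj (f t) * f')) (at t)"
proof -
  have "((\<lambda>t. cnj (f t) * f t) has_vector_derivative (cnj (f t) * f' + cnj f' * f t)) (at t)"
    by (intro has_vector_derivative_mult has_vector_derivative_cnj assms)
  then have "((\<lambda>t. Re (cnj (f t) * f t)) has_real_derivative Re (cnj (f t) * f' + cnj f' * f t)) (at t)"
    by (rule has_field_derivative_Re)
  moreover have "Re (cnj (f t) * f' + cnj f' * f t) = 2 * Re (cnj (f t) * f')"
    by (simp add: algebra_simps)
  moreover have "(\<lambda>t. Re (cnj (f t) * f t)) = (\<lambda>t. (cmod (f t))\<^sup>2)"
    by (rule ext) (metis complex_norm_square mult.commute Re_complex_of_real)
  ultimately show ?thesis by (simp only:)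
qed

lemma dissipation_drop:
  fixes V V' q q' :: "real \<Rightarrow> real"
  assumes V_deriv: "\<And>t. t \<ge> 0 \<Longrightarrow> (V has_real_derivative V' t) (at t)"
    and dissip: "\<And>t. t \<ge> 0 \<Longrightarrow> V' t \<le> - beta * q t"
    and q_deriv: "\<And>t. t \<ge> 0 \<Longrightarrow> (q has_real_derivative q' t) (at t)"
    and q'_le: "\<And>t. t \<ge> 0 \<Longrightarrow> \<bar>q' t\<bar> \<le> Q"
    and "beta \<ge> 0" "Q > 0" "t0 \<ge> 0" "e > 0" "q t0 \<ge> e"
  shows "V (t0 + e / (2 * Q)) \<le> V t0 - beta * (e / 2) * (e / (2 * Q))"
proof -
  define d where "d = e / (2 * Q)"
  have d: "d > 0" "Q * d = e / 2" unfolding d_def using assms by auto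
  have q_lower: "q x \<ge> e / 2" if x: "t0 \<le> x" "x \<le> t0 + d" for x
  proof -
    have "q t0 + Q * t0 \<le> q x + Q * x"
    proof (rule DERIV_nonneg_imp_nondecreasing[OF x(1)])
      fix y assume y: "t0 \<le> y" "y \<le> x"
      then have "((\<lambda>x. q x + Q * x) has_real_derivative q' y + Q) (at y)"
        using q_deriv[of y] \<open>t0 \<ge> 0\<close> by (auto intro!: derivative_eq_intros)
      moreover have "q' y + Q \<ge> 0" using q'_le[of y] y \<open>t0 \<ge> 0\<close> by auto
      ultimately show "\<exists>D. ((\<lambda>x. q x + Q * x) has_real_derivative D) (at y) \<and> D \<ge> 0" by blast
    qed
    moreover have "Q * (x - t0) \<le> Q * d" using x \<open>Q > 0\<close> by simp
    ultimately show ?thesis using d \<open>q t0 \<ge> e\<close> by (simp add: algebra_simps)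
  qed
  have "V (t0 + d) + beta * (e / 2) * (t0 + d) \<le> V t0 + beta * (e / 2) * t0"
  proof (rule DERIV_nonpos_imp_nonincreasing[where f = "\<lambda>x. V x + beta * (e / 2) * x"])
    show "t0 \<le> t0 + d" using d by simp
    fix x assume x: "t0 \<le> x" "x \<le> t0 + d"
    then have "((\<lambda>x. V x + beta * (e / 2) * x) has_real_derivative V' x + beta * (e / 2)) (at x)"
      using V_deriv[of x] \<open>t0 \<ge> 0\<close> by (auto intro!: derivative_eq_intros)
    moreover have "V' x \<le> - beta * (e / 2)"
      using dissip[of x] q_lower[OF x] mult_left_mono[OF q_lower[OF x] \<open>beta \<ge> 0\<close>] x \<open>t0 \<ge> 0\<close>
      by simp
    ultimately show "\<exists>D. ((\<lambda>x. V x + beta * (e / 2) * x) has_real_derivative D) (at x) \<and> D \<le> 0"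
      by (intro exI[of _ "V' x + beta * (e / 2)"]) simp
  qed
  then show ?thesis unfolding d_def[symmetric] by (simp add: distrib_left)
qed

text \<open>Barbalat-type argument: whenever \<open>q t \<ge> e\<close>, the bounded derivative keeps \<open>q \<ge> e / 2\<close>
  for a time \<open>e / (2 Q)\<close>, which costs \<open>V\<close> a fixed amount; as \<open>V\<close> is nonnegative and
  nonincreasing, this can happen only finitely often.\<close>
lemma tendsto_zero_of_dissipation:
  fixes V V' q q' :: "real \<Rightarrow> real"
  assumes V_deriv: "\<And>t. t \<ge> 0 \<Longrightarrow> (V has_real_derivative V' t) (at t)"
    and V_nonneg: "\<And>t. t \<ge> 0 \<Longrightarrow> V t \<ge> 0"
    and dissip: "\<And>t. t \<ge> 0 \<Longrightarrow> V' t \<le> - beta * q t"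
    and q_deriv: "\<And>t. t \<ge> 0 \<Longrightarrow> (q has_real_derivative q' t) (at t)"
    and q'_le: "\<And>t. t \<ge> 0 \<Longrightarrow> \<bar>q' t\<bar> \<le> Q"
    and q_nonneg: "\<And>t. t \<ge> 0 \<Longrightarrow> q t \<ge> 0"
    and "beta > 0"
  shows "(q \<longlongrightarrow> 0) at_top"
proof (rule tendstoI)
  fix e :: real assume "e > 0"
  define Q1 where "Q1 = Q + 1"
  have Q1: "Q1 > 0" "\<And>t. t \<ge> 0 \<Longrightarrow> \<bar>q' t\<bar> \<le> Q1"
    using q'_le[of 0] q'_le unfolding Q1_def by force+
  define c where "c = beta * (e / 2) * (e / (2 * Q1))"
  have "c > 0" unfolding c_def using \<open>e > 0\<close> \<open>beta > 0\<close> Q1 by simp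
  have V_antimono: "V t \<le> V s" if "0 \<le> s" "s \<le> t" for s t
    using that V_deriv dissip q_nonneg \<open>beta > 0\<close>
    by (intro DERIV_nonpos_imp_nonincreasing[OF \<open>s \<le> t\<close>])
      (metis order.trans mult_nonneg_nonneg neg_le_0_iff_le less_imp_le mult_minus_left)
  have "\<exists>T. \<forall>t\<ge>T. q t < e"
  proof (rule ccontr)
    assume "\<not> (\<exists>T. \<forall>t\<ge>T. q t < e)"
    then have large: "\<exists>t\<ge>T. q t \<ge> e" for T by (meson not_less)
    have "\<exists>T\<ge>0. V T \<le> V 0 - real m * c" for m
    proof (induction m)
      case 0
      show ?case by auto
    next
      case (Suc m)
      then obtain T where T: "T \<ge> 0" "V T \<le> V 0 - real m * c" by blast
      obtain t where t: "t \<ge> T" "q t \<ge> e" using large by blast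
      have "V (t + e / (2 * Q1)) \<le> V t - c"
        unfolding c_def using t T \<open>e > 0\<close> \<open>beta > 0\<close> Q1
        by (intro dissipation_drop[OF V_deriv dissip q_deriv]) auto
      moreover have "V t \<le> V T" using V_antimono T t by simp
      moreover have "t + e / (2 * Q1) \<ge> 0" using t T \<open>e > 0\<close> Q1 by simp
      ultimately show ?case using T by (intro exI[of _ "t + e / (2 * Q1)"]) (simp add: algebra_simps)
    qed
    moreover obtain m :: nat where "V 0 < real m * c"
      using reals_Archimedean3[OF \<open>c > 0\<close>] by blast
    ultimately show False using V_nonneg by (meson order.trans diff_less_0_iff_less not_le)
  qed
  then show "eventually (\<lambda>t. dist (q t) 0 < e) at_top"
    unfolding eventually_at_top_linorder
    by (metis q_nonneg dist_real_def abs_of_nonneg diff_zero max.boundedE max.cobounded2)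
qed

lemma has_integral_at_top:
  fixes g :: "real \<Rightarrow> 'a::banach"
  assumes int: "\<And>S. S \<ge> a \<Longrightarrow> (g has_integral F S) {a..S}"
    and lim: "(F \<longlongrightarrow> I) at_top"
  shows "(g has_integral I) {a..}"
proof -
  let ?g = "\<lambda>x. if x \<in> {a..} then g x else 0"
  have restrict: "(?g has_integral F d) {c..d}" if "c \<le> a" "d \<ge> a" for c d
  proof -
    have "((\<lambda>x. if x \<in> {a..d} then g x else 0) has_integral F d) {c..d}"
      using int[OF \<open>d \<ge> a\<close>] that by (subst has_integral_restrict) auto
    then show ?thesis by (rule has_integral_spike_finite[OF finite.emptyI, rotated]) auto
  qed
  have "?g integrable_on cbox c d" for c d
  proof (cases "d \<ge> a")
    case True
    then have "?g integrable_on {min c a..d}"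
      using restrict[of "min c a" d] by auto
    then show ?thesis
      unfolding cbox_interval by (rule integrable_on_subinterval) auto
  next
    case False
    then have "(?g has_integral 0) {c..d}" by (intro has_integral_is_0) auto
    then show ?thesis by auto
  qed
  moreover have "\<exists>B>0. \<forall>c d. ball 0 B \<subseteq> cbox c d \<longrightarrow> norm (integral (cbox c d) ?g - I) < e"
    if "e > 0" for e
  proof -
    obtain B0 where B0: "\<And>S. S \<ge> B0 \<Longrightarrow> dist (F S) I < e"
      using lim \<open>e > 0\<close> unfolding tendsto_iff eventually_at_top_linorder by blast
    define B where "B = max B0 (\<bar>a\<bar> + 1)"
    have "B > 0" unfolding B_def by linarith
    have "norm (integral (cbox c d) ?g - I) < e" if sub: "ball 0 B \<subseteq> cbox c d" for c d
    proof -
      from sub have in_cd: "c \<le> x \<and> x \<le> d" if "\<bar>x\<bar> < B" for x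
        using that by (auto simp: subset_iff dist_real_def)
      have "\<bar>- \<bar>a\<bar>\<bar> < B" unfolding B_def by simp
      then have "c \<le> a" using in_cd by force
      moreover have "d \<ge> B"
      proof (rule ccontr)
        assume "\<not> d \<ge> B"
        then show False using in_cd[of "(max d 0 + B) / 2"] \<open>B > 0\<close> by (cases "d \<ge> 0") (simp_all add: max_def)
      qed
      ultimately have "integral (cbox c d) ?g = F d"
        using restrict[of c d] unfolding B_def cbox_interval by (auto intro: integral_unique)
      then show ?thesis
        using B0[of d] \<open>d \<ge> B\<close> unfolding B_def by (simp add: dist_norm)
    qed
    with \<open>B > 0\<close> show ?thesis by blast
  qed
  ultimately show ?thesis unfolding has_integral_alt' by blast
qed

definition boundary_rate :: "nat \<Rightarrow> real \<Rightarrow> real \<Rightarrow> nat \<Rightarrow> complex" where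
  "boundary_rate N zl zr i = of_real zl * (if i = 1 then 1 else 0) + of_real zr * (if i = N then 1 else 0)"

lemma mmul_proj_left: "mmul N (proj n) a i j = (if i = n \<and> n \<in> {1..N} then a n j else 0)"
proof -
  have "mmul N (proj n) a i j = (\<Sum>k\<in>{1..N}. if k = n then (if i = n then a k j else 0) else 0)"
    unfolding mmul_def proj_def by (rule sum.cong) auto
  then show ?thesis by (simp add: sum.delta)
qed

lemma mmul_proj_right: "mmul N a (proj n) i j = (if j = n \<and> n \<in> {1..N} then a i n else 0)"
proof -
  have "mmul N a (proj n) i j = (\<Sum>k\<in>{1..N}. if k = n then (if j = n then a i k else 0) else 0)"
    unfolding mmul_def proj_def by (rule sum.cong) auto
  then show ?thesis by (simp add: sum.delta)
qed

lemma mmul_boundary_left: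
  assumes "N \<ge> 1"
  shows "mmul N (\<lambda>r s. of_real zl * proj 1 r s + of_real zr * proj N r s) a i j
    = boundary_rate N zl zr i * a i j"
proof -
  have "mmul N (\<lambda>r s. of_real zl * proj 1 r s + of_real zr * proj N r s) a i j
      = of_real zl * mmul N (proj 1) a i j + of_real zr * mmul N (proj N) a i j"
    unfolding mmul_def by (simp add: ring_distribs sum.distrib sum_distrib_left mult.assoc)
  then show ?thesis using assms unfolding mmul_proj_left boundary_rate_def by (auto simp: ring_distribs)
qed

lemma mmul_boundary_right:
  assumes "N \<ge> 1"
  shows "mmul N a (\<lambda>r s. of_real zl * proj 1 r s + of_real zr * proj N r s) i j
    = boundary_rate N zl zr j * a i j"
proof -
  have "mmul N a (\<lambda>r s. of_real zl * proj 1 r s + of_real zr * proj N r s) i j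
      = of_real zl * mmul N a (proj 1) i j + of_real zr * mmul N a (proj N) i j"
    unfolding mmul_def by (simp add: ring_distribs sum.distrib sum_distrib_left mult_ac)
  then show ?thesis using assms unfolding mmul_proj_right boundary_rate_def by (auto simp: ring_distribs)
qed

lemma sum_dephasing:
  assumes "i \<in> {1..N}" "j \<in> {1..N}"
  shows "(\<Sum>n\<in>{1..N}. mmul N (mmul N (proj n) a) (proj n) i j) = (if i = j then a i i else 0)"
proof -
  have "(\<Sum>n\<in>{1..N}. mmul N (mmul N (proj n) a) (proj n) i j)
      = (\<Sum>n\<in>{1..N}. if n = j then (if i = j then a i i else 0) else 0)"
    unfolding mmul_proj_right mmul_proj_left by (rule sum.cong) auto
  then show ?thesis using assms by simp
qed

lemma lind_eq:
  assumes "N \<ge> 1"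
  shows "lind N v zl zr beta a i j = (if i \<in> {1..N} \<and> j \<in> {1..N} then
     - \<i> * (mmul N (hmat N v) a i j - mmul N a (hmat N v) i j)
     - (boundary_rate N zl zr i + boundary_rate N zl zr j) * a i j
     + of_real beta * ((if i = j then a i i else 0) - a i j) else 0)"
proof (cases "i \<in> {1..N} \<and> j \<in> {1..N}")
  case True
  then have i: "i \<in> {1..N}" and j: "j \<in> {1..N}" by auto
  with True show ?thesis
    unfolding lind_def mmul_boundary_left[OF assms] mmul_boundary_right[OF assms] sum_dephasing[OF i j]
    by (simp add: ring_distribs)
next
  case False
  then show ?thesis unfolding lind_def by (simp only: if_False)
qed

lemma lind_sums:
  assumes N: "N \<ge> 1" and s: "\<And>p q. p \<in> {1..N} \<Longrightarrow> q \<in> {1..N} \<Longrightarrow> (\<lambda>k. f k p q) sums A p q"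
  shows "(\<lambda>k. lind N v zl zr beta (f k) i j) sums lind N v zl zr beta A i j"
  unfolding lind_eq[OF N] mmul_def
  by (auto intro!: sums_minus sums_diff sums_add sums_mult sums_mult2 sums_sum s)

lemma lind_scale:
  assumes "N \<ge> 1"
  shows "lind N v zl zr beta (\<lambda>p q. c * a p q) i j = c * lind N v zl zr beta a i j"
  unfolding lind_eq[OF assms] mmul_def by (simp add: sum_distrib_left algebra_simps)

definition l1norm :: "nat \<Rightarrow> cmat \<Rightarrow> real" where
  "l1norm N a = (\<Sum>p\<in>{1..N}. \<Sum>q\<in>{1..N}. cmod (a p q))"

lemma l1norm_nonneg: "l1norm N a \<ge> 0"
  unfolding l1norm_def by (intro sum_nonneg norm_ge_zero)

lemma row_sum_le_l1norm: "p \<in> {1..N} \<Longrightarrow> (\<Sum>q\<in>{1..N}. cmod (a p q)) \<le> l1norm N a"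
  unfolding l1norm_def by (rule member_le_sum) (auto intro: sum_nonneg)

lemma entry_le_l1norm: "p \<in> {1..N} \<Longrightarrow> q \<in> {1..N} \<Longrightarrow> cmod (a p q) \<le> l1norm N a"
  by (rule order.trans[OF member_le_sum row_sum_le_l1norm]) auto

lemma mmul_entry_le:
  assumes "i \<in> {1..N}" "j \<in> {1..N}"
  shows "cmod (mmul N A B i j) \<le> l1norm N A * l1norm N B"
proof -
  have "cmod (mmul N A B i j) \<le> (\<Sum>k\<in>{1..N}. cmod (A i k) * cmod (B k j))"
    unfolding mmul_def norm_mult[symmetric] by (rule norm_sum)
  also have "\<dots> \<le> (\<Sum>k\<in>{1..N}. cmod (A i k) * l1norm N B)"
    using assms by (intro sum_mono mult_left_mono entry_le_l1norm) auto
  also have "\<dots> \<le> l1norm N A * l1norm N B"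
    unfolding sum_distrib_right[symmetric]
    by (intro mult_right_mono row_sum_le_l1norm assms l1norm_nonneg)
  finally show ?thesis .
qed

lemma boundary_rate_norm_le: "zl \<ge> 0 \<Longrightarrow> zr \<ge> 0 \<Longrightarrow> cmod (boundary_rate N zl zr i) \<le> zl + zr"
  unfolding boundary_rate_def by (auto intro!: order.trans[OF norm_triangle_ineq])

lemma lind_entry_le:
  assumes N: "N \<ge> 1" and zl: "zl \<ge> 0" and zr: "zr \<ge> 0" and beta: "beta \<ge> 0"
  shows "cmod (lind N v zl zr beta a i j)
    \<le> (2 * l1norm N (hmat N v) + 2 * (zl + zr) + 2 * beta) * l1norm N a"
proof (cases "i \<in> {1..N} \<and> j \<in> {1..N}")
  case True
  then have i: "i \<in> {1..N}" and j: "j \<in> {1..N}" by auto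
  let ?h = "l1norm N (hmat N v)" and ?a = "l1norm N a"
  define X where "X = mmul N (hmat N v) a i j - mmul N a (hmat N v) i j"
  define W where "W = boundary_rate N zl zr i + boundary_rate N zl zr j"
  define D where "D = (if i = j then a i i else 0) - a i j"
  have X: "cmod X \<le> ?h * ?a + ?a * ?h"
    unfolding X_def using norm_triangle_ineq4 by (rule order.trans[OF _ add_mono]) (intro mmul_entry_le i j)+
  have W: "cmod W \<le> (zl + zr) + (zl + zr)"
    unfolding W_def using norm_triangle_ineq by (rule order.trans[OF _ add_mono]) (intro boundary_rate_norm_le zl zr)+
  have D: "cmod D \<le> ?a + ?a"
    unfolding D_def using norm_triangle_ineq4
    by (rule order.trans[OF _ add_mono]) (use entry_le_l1norm[OF i i] entry_le_l1norm[OF i j] l1norm_nonneg in auto)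
  have "cmod (lind N v zl zr beta a i j) \<le> cmod X + cmod W * ?a + beta * cmod D"
  proof -
    have "lind N v zl zr beta a i j = - \<i> * X - W * a i j + of_real beta * D"
      unfolding lind_eq[OF N] X_def W_def D_def using True by simp
    also have "cmod \<dots> \<le> cmod X + cmod W * cmod (a i j) + beta * cmod D"
      using norm_triangle_ineq4[of "- \<i> * X" "W * a i j"] norm_triangle_ineq[of "- \<i> * X - W * a i j" "of_real beta * D"]
      by (simp add: norm_mult beta)
    also have "\<dots> \<le> cmod X + cmod W * ?a + beta * cmod D"
      using entry_le_l1norm[OF i j] by (simp add: mult_left_mono)
    finally show ?thesis .
  qed
  also have "\<dots> \<le> (?h * ?a + ?a * ?h) + ((zl + zr) + (zl + zr)) * ?a + beta * (?a + ?a)"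
    using X W D l1norm_nonneg[of N a] beta by (intro add_mono mult_right_mono mult_left_mono) auto
  finally show ?thesis by (simp add: algebra_simps)
next
  case False
  then show ?thesis using zl zr beta l1norm_nonneg[of N a] l1norm_nonneg[of N "hmat N v"]
    unfolding lind_eq[OF N] if_not_P[OF False] by simp
qed

definition frobenius_sq :: "nat \<Rightarrow> cmat \<Rightarrow> real" where
  "frobenius_sq N a = (\<Sum>i\<in>{1..N}. \<Sum>j\<in>{1..N}. (cmod (a i j))\<^sup>2)"

lemma entry_sq_le_frobenius_sq:
  assumes "p \<in> {1..N}" "q \<in> {1..N}"
  shows "(cmod (a p q))\<^sup>2 \<le> frobenius_sq N a"
proof -
  have "(cmod (a p q))\<^sup>2 \<le> (\<Sum>j\<in>{1..N}. (cmod (a p j))\<^sup>2)"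
    using assms by (intro member_le_sum) auto
  also have "\<dots> \<le> frobenius_sq N a"
    unfolding frobenius_sq_def using assms
    by (intro member_le_sum[where f = "\<lambda>i. \<Sum>j\<in>{1..N}. (cmod (a i j))\<^sup>2"] sum_nonneg) auto
  finally show ?thesis .
qed

section \<open>The semigroup as an exponential series\<close>

locale dephasing_chain =
  fixes N :: nat and v :: "nat \<Rightarrow> real" and zl zr beta :: real
  assumes N_pos: "N \<ge> 1" and zl_nonneg: "zl \<ge> 0" and zr_nonneg: "zr \<ge> 0"
    and beta_nonneg: "beta \<ge> 0"
begin

abbreviation L :: "cmat \<Rightarrow> cmat" where "L \<equiv> lind N v zl zr beta"
abbreviation T :: "real \<Rightarrow> cmat \<Rightarrow> cmat" where "T \<equiv> semigroup N v zl zr beta"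

definition growth :: real where
  "growth = real N * real N * (2 * l1norm N (hmat N v) + 2 * (zl + zr) + 2 * beta)"

lemma l1norm_lind_le: "l1norm N (L a) \<le> growth * l1norm N a"
proof -
  have "l1norm N (L a) \<le> (\<Sum>p\<in>{1..N}. \<Sum>q\<in>{1..N}.
      (2 * l1norm N (hmat N v) + 2 * (zl + zr) + 2 * beta) * l1norm N a)"
    unfolding l1norm_def[of N "L a"]
    by (intro sum_mono lind_entry_le N_pos zl_nonneg zr_nonneg beta_nonneg)
  then show ?thesis by (simp add: growth_def)
qed

lemma entry_funpow_lind_le:
  assumes "i \<in> {1..N}" "j \<in> {1..N}"
  shows "cmod ((L ^^ k) a i j) \<le> growth ^ k * l1norm N a"
proof -
  have "growth \<ge> 0"
    unfolding growth_def using l1norm_nonneg zl_nonneg zr_nonneg beta_nonneg by simp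
  then have "l1norm N ((L ^^ k) a) \<le> growth ^ k * l1norm N a"
    by (induction k) (auto intro: order.trans[OF l1norm_lind_le] mult_left_mono simp: mult.assoc)
  then show ?thesis using entry_le_l1norm[OF assms] by (rule order.trans[rotated])
qed

definition semigroup_series :: "cmat \<Rightarrow> nat \<Rightarrow> nat \<Rightarrow> complex \<Rightarrow> complex" where
  "semigroup_series a i j z = (\<Sum>k. (L ^^ k) a i j / fact k * z ^ k)"

lemma summable_semigroup_series:
  assumes "i \<in> {1..N}" "j \<in> {1..N}"
  shows "summable (\<lambda>k. (L ^^ k) a i j / fact k * z ^ k)"
proof (rule summable_comparison_test')
  show "summable (\<lambda>k. l1norm N a * (inverse (fact k) * (growth * cmod z) ^ k))"
    by (intro summable_mult summable_exp)
  fix k :: nat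
  have "cmod ((L ^^ k) a i j / fact k * z ^ k) = cmod ((L ^^ k) a i j) * (inverse (fact k) * cmod z ^ k)"
    by (simp add: norm_mult norm_divide norm_power field_simps)
  also have "\<dots> \<le> (growth ^ k * l1norm N a) * (inverse (fact k) * cmod z ^ k)"
    by (intro mult_right_mono entry_funpow_lind_le assms) auto
  finally show "cmod ((L ^^ k) a i j / fact k * z ^ k)
      \<le> l1norm N a * (inverse (fact k) * (growth * cmod z) ^ k)"
    by (simp add: power_mult_distrib mult_ac)
qed

lemma semigroup_eq_series: "T t a i j = semigroup_series a i j (of_real t)"
  unfolding semigroup_def semigroup_series_def by (intro suminf_cong) (simp add: field_simps)

lemma semigroup_sums:
  assumes "i \<in> {1..N}" "j \<in> {1..N}"
  shows "(\<lambda>k. complex_of_real (t ^ k / fact k) * (L ^^ k) a i j) sums T t a i j"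
proof -
  have "(\<lambda>k. complex_of_real (t ^ k / fact k) * (L ^^ k) a i j)
      = (\<lambda>k. (L ^^ k) a i j / fact k * of_real t ^ k)"
    by (simp add: fun_eq_iff field_simps)
  then show ?thesis
    unfolding semigroup_eq_series semigroup_series_def
    using summable_semigroup_series[OF assms] by (simp add: summable_sums)
qed

lemma semigroup_series_has_field_derivative:
  assumes "i \<in> {1..N}" "j \<in> {1..N}"
  shows "(semigroup_series a i j has_field_derivative semigroup_series (L a) i j z) (at z)"
proof -
  have "diffs (\<lambda>k. (L ^^ k) a i j / fact k) = (\<lambda>k. (L ^^ k) (L a) i j / fact k)"
    unfolding diffs_def fact_Suc of_nat_mult funpow_Suc_right comp_apply fun_eq_iff
    by (simp add: field_simps del: of_nat_Suc)
  moreover have "(semigroup_series a i j has_field_derivative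
      (\<Sum>k. diffs (\<lambda>k. (L ^^ k) a i j / fact k) k * z ^ k)) (at z)"
    unfolding semigroup_series_def[abs_def]
    by (rule termdiffs_strong_converges_everywhere[OF summable_semigroup_series[OF assms]])
  ultimately show ?thesis unfolding semigroup_series_def by simp
qed

lemma semigroup_has_vector_derivative:
  assumes "i \<in> {1..N}" "j \<in> {1..N}"
  shows "((\<lambda>t. T t a i j) has_vector_derivative T t (L a) i j) (at t within S)"
  unfolding semigroup_eq_series
  by (rule has_vector_derivative_real_field semigroup_series_has_field_derivative assms)+

lemma semigroup_lind_commute:
  assumes "i \<in> {1..N}" "j \<in> {1..N}"
  shows "T t (L a) i j = L (T t a) i j"
proof -
  have "(\<lambda>k. L (\<lambda>p q. complex_of_real (t ^ k / fact k) * (L ^^ k) a p q) i j) sums L (T t a) i j"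
    by (rule lind_sums[OF N_pos semigroup_sums])
  moreover have "L (\<lambda>p q. complex_of_real (t ^ k / fact k) * (L ^^ k) a p q) i j
      = complex_of_real (t ^ k / fact k) * (L ^^ k) (L a) i j" for k
    by (subst lind_scale[OF N_pos]) (simp add: funpow_swap1)
  ultimately have "(\<lambda>k. complex_of_real (t ^ k / fact k) * (L ^^ k) (L a) i j) sums L (T t a) i j"
    by simp
  with semigroup_sums[OF assms, of t "L a"] show ?thesis by (rule sums_unique2)
qed

lemma semigroup_zero: "T 0 a i j = a i j"
  unfolding semigroup_def using sums_single[of 0 "\<lambda>_. a i j"]
  by (simp add: sums_iff power_0_left if_distrib if_distribR cong: if_cong)

lemma semigroup_uminus:
  assumes "i \<in> {1..N}" "j \<in> {1..N}"
  shows "T t (\<lambda>p q. - b p q) i j = - T t b i j"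
proof -
  have neg: "L (\<lambda>p q. - a p q) = (\<lambda>p q. - L a p q)" for a
    using lind_scale[OF N_pos, of v zl zr beta "-1" a] by (simp add: fun_eq_iff)
  have "(L ^^ k) (\<lambda>p q. - b p q) = (\<lambda>p q. - (L ^^ k) b p q)" for k
    by (induction k) (simp_all add: neg)
  then show ?thesis
    using sums_minus[OF semigroup_sums[OF assms, of t b]] semigroup_sums[OF assms, of t "\<lambda>p q. - b p q"]
    by (simp add: sums_iff)
qed

end

section \<open>Dissipativity and decay of coherences\<close>

lemma sum_swap_outer_inner:
  "(\<Sum>i\<in>A. \<Sum>j\<in>B. \<Sum>k\<in>A. g i j k) = (\<Sum>i\<in>A. \<Sum>j\<in>B. \<Sum>k\<in>A. g k j i)"
proof -
  have "(\<Sum>i\<in>A. \<Sum>j\<in>B. \<Sum>k\<in>A. g i j k) = (\<Sum>j\<in>B. \<Sum>i\<in>A. \<Sum>k\<in>A. g i j k)"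
    by (rule sum.swap)
  also have "\<dots> = (\<Sum>j\<in>B. \<Sum>k\<in>A. \<Sum>i\<in>A. g i j k)"
    by (intro sum.cong refl sum.swap)
  also have "\<dots> = (\<Sum>i\<in>A. \<Sum>j\<in>B. \<Sum>k\<in>A. g k j i)"
    by (rule sum.swap[symmetric])
  finally show ?thesis .
qed

lemma Im_frobenius_mmul_hermitian_left:
  assumes "\<And>i k. cnj (H i k) = H k i"
  shows "Im (\<Sum>i\<in>{1..N}. \<Sum>j\<in>{1..N}. cnj (x i j) * mmul N H x i j) = 0"
proof -
  let ?S = "\<Sum>i\<in>{1..N}. \<Sum>j\<in>{1..N}. cnj (x i j) * mmul N H x i j"
  have "cnj ?S = (\<Sum>i\<in>{1..N}. \<Sum>j\<in>{1..N}. \<Sum>k\<in>{1..N}. x i j * H k i * cnj (x k j))"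
    unfolding mmul_def by (simp add: sum_distrib_left assms mult.assoc)
  also have "\<dots> = (\<Sum>i\<in>{1..N}. \<Sum>j\<in>{1..N}. \<Sum>k\<in>{1..N}. x k j * H i k * cnj (x i j))"
    by (rule sum_swap_outer_inner)
  also have "\<dots> = ?S"
    unfolding mmul_def by (simp add: sum_distrib_left mult_ac)
  finally show ?thesis by (metis Reals_cnj_iff complex_is_Real_iff)
qed

lemma Im_frobenius_mmul_hermitian_right:
  assumes "\<And>i k. cnj (H i k) = H k i"
  shows "Im (\<Sum>i\<in>{1..N}. \<Sum>j\<in>{1..N}. cnj (x i j) * mmul N x H i j) = 0"
proof -
  let ?S = "\<Sum>i\<in>{1..N}. \<Sum>j\<in>{1..N}. cnj (x i j) * mmul N x H i j"
  have "cnj ?S = (\<Sum>i\<in>{1..N}. \<Sum>j\<in>{1..N}. \<Sum>k\<in>{1..N}. x i j * cnj (x i k) * H j k)"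
    unfolding mmul_def by (simp add: sum_distrib_left assms mult.assoc)
  also have "\<dots> = (\<Sum>i\<in>{1..N}. \<Sum>j\<in>{1..N}. \<Sum>k\<in>{1..N}. x i k * cnj (x i j) * H k j)"
    by (intro sum.cong refl sum.swap)
  also have "\<dots> = ?S"
    unfolding mmul_def by (simp add: sum_distrib_left mult_ac)
  finally show ?thesis by (metis Reals_cnj_iff complex_is_Real_iff)
qed

lemma hmat_hermitian: "cnj (hmat N v i k) = hmat N v k i"
  unfolding hmat_def by auto

lemma Re_boundary_rate_nonneg: "zl \<ge> 0 \<Longrightarrow> zr \<ge> 0 \<Longrightarrow> Re (boundary_rate N zl zr i) \<ge> 0"
  unfolding boundary_rate_def by auto

context dephasing_chain
begin

lemma Re_frobenius_lind_le:
  assumes p: "p \<in> {1..N}" and q: "q \<in> {1..N}" and "p \<noteq> q"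
  shows "Re (\<Sum>i\<in>{1..N}. \<Sum>j\<in>{1..N}. cnj (x i j) * L x i j) \<le> - beta * (cmod (x p q))\<^sup>2"
proof -
  define S1 where "S1 = (\<Sum>i\<in>{1..N}. \<Sum>j\<in>{1..N}. cnj (x i j) * mmul N (hmat N v) x i j)"
  define S2 where "S2 = (\<Sum>i\<in>{1..N}. \<Sum>j\<in>{1..N}. cnj (x i j) * mmul N x (hmat N v) i j)"
  define W where "W i j = Re (boundary_rate N zl zr i + boundary_rate N zl zr j) * (cmod (x i j))\<^sup>2" for i j
  define D where "D i j = (if i = j then 0 else beta * (cmod (x i j))\<^sup>2)" for i j
  have W: "W i j \<ge> 0" and D: "D i j \<ge> 0" for i j
    unfolding W_def D_def using Re_boundary_rate_nonneg[OF zl_nonneg zr_nonneg] beta_nonneg by auto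
  have "Re (cnj (x i j) * L x i j)
      = Im (cnj (x i j) * mmul N (hmat N v) x i j) - Im (cnj (x i j) * mmul N x (hmat N v) i j)
        - W i j - D i j" if "i \<in> {1..N}" "j \<in> {1..N}" for i j
  proof -
    have sq: "cmod z * cmod z = Re z * Re z + Im z * Im z" for z
      by (metis cmod_power2 power2_eq_square)
    show ?thesis
      using that unfolding lind_eq[OF N_pos] W_def D_def
      by (simp add: algebra_simps sq power2_eq_square)
  qed
  then have split: "Re (\<Sum>i\<in>{1..N}. \<Sum>j\<in>{1..N}. cnj (x i j) * L x i j)
      = Im S1 - Im S2 - (\<Sum>i\<in>{1..N}. \<Sum>j\<in>{1..N}. W i j) - (\<Sum>i\<in>{1..N}. \<Sum>j\<in>{1..N}. D i j)"
    unfolding S1_def S2_def by (simp add: Re_sum Im_sum sum_subtractf)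
  moreover have "Im S1 = 0" "Im S2 = 0"
    unfolding S1_def S2_def
    by (intro Im_frobenius_mmul_hermitian_left Im_frobenius_mmul_hermitian_right hmat_hermitian)+
  moreover have "D p q \<le> (\<Sum>i\<in>{1..N}. \<Sum>j\<in>{1..N}. D i j)"
  proof -
    have "D p q \<le> (\<Sum>j\<in>{1..N}. D p j)"
      using q D by (intro member_le_sum) auto
    also have "\<dots> \<le> (\<Sum>i\<in>{1..N}. \<Sum>j\<in>{1..N}. D i j)"
      using p D by (intro member_le_sum[where f = "\<lambda>i. \<Sum>j\<in>{1..N}. D i j"] sum_nonneg) auto
    finally show ?thesis .
  qed
  moreover have "D p q = beta * (cmod (x p q))\<^sup>2"
    using \<open>p \<noteq> q\<close> unfolding D_def by simp
  moreover have "(\<Sum>i\<in>{1..N}. \<Sum>j\<in>{1..N}. W i j) \<ge> 0"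
    using W by (intro sum_nonneg)
  ultimately show ?thesis by simp
qed

lemma semigroup_entry_has_vector_derivative:
  assumes "i \<in> {1..N}" "j \<in> {1..N}"
  shows "((\<lambda>t. T t a i j) has_vector_derivative L (T t a) i j) (at t within S)"
  using semigroup_has_vector_derivative[OF assms] semigroup_lind_commute[OF assms] by simp

lemma frobenius_sq_semigroup_has_derivative:
  "((\<lambda>t. frobenius_sq N (T t a)) has_real_derivative
     2 * Re (\<Sum>i\<in>{1..N}. \<Sum>j\<in>{1..N}. cnj (T t a i j) * L (T t a) i j)) (at t)"
proof -
  have "((\<lambda>t. frobenius_sq N (T t a)) has_real_derivative
     (\<Sum>i\<in>{1..N}. \<Sum>j\<in>{1..N}. 2 * Re (cnj (T t a i j) * L (T t a) i j))) (at t)"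
    unfolding frobenius_sq_def
    by (intro DERIV_sum DERIV_cmod_power2 semigroup_entry_has_vector_derivative)
  then show ?thesis by (simp add: Re_sum sum_distrib_left)
qed

lemma semigroup_offdiag_tendsto_zero:
  assumes "beta > 0" and p: "p \<in> {1..N}" and q: "q \<in> {1..N}" and "p \<noteq> q"
  shows "((\<lambda>t. T t a p q) \<longlongrightarrow> 0) at_top"
proof -
  define V where "V t = frobenius_sq N (T t a)" for t
  define V' where "V' t = 2 * Re (\<Sum>i\<in>{1..N}. \<Sum>j\<in>{1..N}. cnj (T t a i j) * L (T t a) i j)" for t
  define f where "f t = (cmod (T t a p q))\<^sup>2" for t
  define f' where "f' t = 2 * Re (cnj (T t a p q) * L (T t a) p q)" for t
  have V_deriv: "(V has_real_derivative V' t) (at t)" for t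
    unfolding V_def[abs_def] V'_def by (rule frobenius_sq_semigroup_has_derivative)
  have dissip: "V' t \<le> - (2 * beta) * f t" for t
    unfolding V'_def f_def using Re_frobenius_lind_le[OF p q \<open>p \<noteq> q\<close>] by simp
  have f_deriv: "(f has_real_derivative f' t) (at t)" for t
    unfolding f_def[abs_def] f'_def
    by (intro DERIV_cmod_power2 semigroup_entry_has_vector_derivative p q)
  have "V' t \<le> 0" for t
  proof -
    have "0 \<le> (2 * beta) * f t" unfolding f_def using \<open>beta > 0\<close> by simp
    then show ?thesis using dissip[of t] by linarith
  qed
  then have V_antimono: "V t \<le> V s" if "s \<le> t" for s t
    using V_deriv by (intro DERIV_nonpos_imp_nonincreasing[OF \<open>s \<le> t\<close>]) blast
  have entry_le: "cmod (T t a i j) \<le> sqrt (V 0)" if "t \<ge> 0" "i \<in> {1..N}" "j \<in> {1..N}" for t i j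
  proof (rule real_le_rsqrt)
    show "(cmod (T t a i j))\<^sup>2 \<le> V 0"
      using entry_sq_le_frobenius_sq[OF that(2,3), of "T t a"] V_antimono[OF that(1)]
      unfolding V_def by linarith
  qed
  have V_nonneg: "V t \<ge> 0" for t unfolding V_def frobenius_sq_def by (intro sum_nonneg) auto
  define C where "C = 2 * l1norm N (hmat N v) + 2 * (zl + zr) + 2 * beta"
  define M where "M = sqrt (V 0)"
  have "M \<ge> 0" "C \<ge> 0"
    unfolding M_def C_def using V_nonneg l1norm_nonneg zl_nonneg zr_nonneg beta_nonneg by auto
  have f'_le: "\<bar>f' t\<bar> \<le> 2 * (M * (C * (real N * real N * M)))" if "t \<ge> 0" for t
  proof -
    have "l1norm N (T t a) \<le> (\<Sum>i\<in>{1..N}. \<Sum>j\<in>{1..N}. M)"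
      unfolding l1norm_def M_def by (intro sum_mono entry_le that) auto
    then have "C * l1norm N (T t a) \<le> C * (real N * real N * M)"
      using \<open>C \<ge> 0\<close> by (intro mult_left_mono) simp_all
    with lind_entry_le[OF N_pos zl_nonneg zr_nonneg beta_nonneg, of v "T t a" p q]
    have "cmod (L (T t a) p q) \<le> C * (real N * real N * M)"
      unfolding C_def by linarith
    then have "cmod (T t a p q) * cmod (L (T t a) p q) \<le> M * (C * (real N * real N * M))"
      using entry_le[OF that p q] \<open>M \<ge> 0\<close> unfolding M_def by (intro mult_mono) auto
    moreover have "\<bar>f' t\<bar> \<le> 2 * (cmod (T t a p q) * cmod (L (T t a) p q))"
      unfolding f'_def using abs_Re_le_cmod[of "cnj (T t a p q) * L (T t a) p q"]
      by (simp add: norm_mult)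
    ultimately show ?thesis by linarith
  qed
  have "(f \<longlongrightarrow> 0) at_top"
  proof (rule tendsto_zero_of_dissipation)
    show "(V has_real_derivative V' t) (at t)" "V t \<ge> 0" "V' t \<le> - (2 * beta) * f t"
      "(f has_real_derivative f' t) (at t)" "f t \<ge> 0" for t
      using V_deriv V_nonneg dissip f_deriv unfolding f_def by auto
    show "\<bar>f' t\<bar> \<le> 2 * (M * (C * (real N * real N * M)))" if "t \<ge> 0" for t
      using f'_le[OF that] .
  qed (use \<open>beta > 0\<close> in simp)
  then have "((\<lambda>t. sqrt (f t)) \<longlongrightarrow> sqrt 0) at_top"
    by (rule tendsto_real_sqrt)
  moreover have "(\<lambda>t. sqrt (f t)) = (\<lambda>t. cmod (T t a p q))"
    unfolding f_def by (simp only: real_sqrt_abs abs_norm_cancel)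
  ultimately have "((\<lambda>t. cmod (T t a p q)) \<longlongrightarrow> 0) at_top"
    by (simp only: real_sqrt_zero)
  then show ?thesis by (rule tendsto_norm_zero_cancel)
qed

lemma has_integral_semigroup_stationary:
  assumes "beta > 0" and stat: "L R = (\<lambda>i j. - b i j)"
    and p: "p \<in> {1..N}" and q: "q \<in> {1..N}" and "p \<noteq> q"
  shows "((\<lambda>s. T s b p q) has_integral R p q) {0..}"
proof (rule has_integral_at_top)
  have deriv: "((\<lambda>s. - T s R p q) has_vector_derivative T s b p q) (at s within X)" for s X
    using has_vector_derivative_minus[OF semigroup_has_vector_derivative[OF p q, of R s X]]
    unfolding stat semigroup_uminus[OF p q] by simp
  show "((\<lambda>s. T s b p q) has_integral R p q - T S R p q) {0..S}" if "S \<ge> 0" for S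
  proof -
    have "((\<lambda>s. T s b p q) has_integral (- T S R p q) - (- T 0 R p q)) {0..S}"
      by (rule fundamental_theorem_of_calculus[OF that deriv])
    then show ?thesis by (simp add: semigroup_zero)
  qed
  show "((\<lambda>S. R p q - T S R p q) \<longlongrightarrow> R p q) at_top"
    using tendsto_diff[OF tendsto_const semigroup_offdiag_tendsto_zero[OF assms(1) p q \<open>p \<noteq> q\<close>]]
    by simp
qed

end

section \<open>The stationary state of the free chain\<close>

lemma mmul_hmat0_left:
  assumes "i \<in> {1..N}"
  shows "mmul N (hmat N (\<lambda>_. 0)) a i j
    = - ((if i + 1 \<le> N then a (i + 1) j else 0) + (if 2 \<le> i then a (i - 1) j else 0))"
proof -
  have "mmul N (hmat N (\<lambda>_. 0)) a i j
      = - ((\<Sum>k\<in>{1..N}. if k = i + 1 then a k j else 0) + (\<Sum>k\<in>{1..N}. if k = i - 1 \<and> 2 \<le> i then a k j else 0))"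
    unfolding mmul_def hmat_def sum_negf[symmetric] sum.distrib[symmetric]
    using assms by (intro sum.cong refl) auto
  then show ?thesis using assms by (auto simp: sum.delta')
qed

lemma mmul_hmat0_right:
  assumes "j \<in> {1..N}"
  shows "mmul N a (hmat N (\<lambda>_. 0)) i j
    = - ((if j + 1 \<le> N then a i (j + 1) else 0) + (if 2 \<le> j then a i (j - 1) else 0))"
proof -
  have "mmul N a (hmat N (\<lambda>_. 0)) i j
      = - ((\<Sum>k\<in>{1..N}. if k = j + 1 then a i k else 0) + (\<Sum>k\<in>{1..N}. if k = j - 1 \<and> 2 \<le> j then a i k else 0))"
    unfolding mmul_def hmat_def sum_negf[symmetric] sum.distrib[symmetric]
    using assms by (intro sum.cong refl) auto
  then show ?thesis using assms by (auto simp: sum.delta')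
qed

text \<open>The diagonal profile is forced by the left boundary, \<open>zl * d 1 = ainl + c\<close>, and by
  the balance of the current \<open>c\<close> on the first off-diagonals, which makes \<open>d\<close> rise by
  \<open>c * (beta + boundary rates)\<close> from one site to the next.\<close>
definition stationary_diag :: "nat \<Rightarrow> real \<Rightarrow> real \<Rightarrow> real \<Rightarrow> real \<Rightarrow> real \<Rightarrow> nat \<Rightarrow> real" where
  "stationary_diag N zl zr beta ainl c p = (ainl + c) / zl
     + c * (beta * (real p - 1) + (if p \<ge> 2 then zl else 0) + (if p = N then zr else 0))"

definition stationary_state :: "nat \<Rightarrow> real \<Rightarrow> real \<Rightarrow> real \<Rightarrow> real \<Rightarrow> real \<Rightarrow> cmat" where
  "stationary_state N zl zr beta ainl c = (\<lambda>p q. if p \<in> {1..N} \<and> q \<in> {1..N} then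
     (if p = q then complex_of_real (stationary_diag N zl zr beta ainl c p)
      else if q = p + 1 then \<i> * complex_of_real c
      else if p = q + 1 then - \<i> * complex_of_real c else 0) else 0)"

context
  fixes N :: nat and zl zr beta ainl c :: real
  assumes N: "N \<ge> 2"
begin

private abbreviation "R \<equiv> stationary_state N zl zr beta ainl c"
private abbreviation "d \<equiv> stationary_diag N zl zr beta ainl c"
private lemma N_pos: "N \<ge> 1" using N by simp

private abbreviation "L0 \<equiv> lind N (\<lambda>_. 0) zl zr beta"

lemma lind_stationary_state_diag:
  assumes "i \<in> {1..N}"
  shows "L0 R i i = 2 * complex_of_real c * ((if i + 1 \<le> N then 1 else 0) - (if 2 \<le> i then 1 else 0))
      - 2 * boundary_rate N zl zr i * complex_of_real (d i)"
  using assms N unfolding lind_eq[OF N_pos] mmul_hmat0_left[OF assms] mmul_hmat0_right[OF assms]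
  by (auto simp: stationary_state_def algebra_simps)

lemma lind_stationary_state_superdiag:
  assumes "i \<in> {1..N}" "i + 1 \<le> N"
  shows "L0 R i (i + 1) = - \<i> * (complex_of_real (d i) - complex_of_real (d (i + 1)))
      - (boundary_rate N zl zr i + boundary_rate N zl zr (i + 1) + complex_of_real beta) * (\<i> * complex_of_real c)"
proof -
  have j: "i + 1 \<in> {1..N}" using assms by auto
  show ?thesis using assms N
    unfolding lind_eq[OF N_pos] mmul_hmat0_left[OF assms(1)] mmul_hmat0_right[OF j]
    by (auto simp: stationary_state_def algebra_simps)
qed

lemma lind_stationary_state_subdiag:
  assumes "j \<in> {1..N}" "j + 1 \<le> N"
  shows "L0 R (j + 1) j = - \<i> * (complex_of_real (d (j + 1)) - complex_of_real (d j))
      + (boundary_rate N zl zr j + boundary_rate N zl zr (j + 1) + complex_of_real beta) * (\<i> * complex_of_real c)"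
proof -
  have i: "j + 1 \<in> {1..N}" using assms by auto
  show ?thesis using assms N
    unfolding lind_eq[OF N_pos] mmul_hmat0_left[OF i] mmul_hmat0_right[OF assms(1)]
    by (auto simp: stationary_state_def algebra_simps)
qed

lemma lind_stationary_state_far:
  assumes i: "i \<in> {1..N}" and j: "j \<in> {1..N}" and far: "i + 2 \<le> j \<or> j + 2 \<le> i"
  shows "L0 R i j = 0"
proof -
  have R0: "R p q = 0" if "p + 2 \<le> q \<or> q + 2 \<le> p" for p q
    using that unfolding stationary_state_def by auto
  consider "j = i + 2" | "i = j + 2" | "i + 3 \<le> j \<or> j + 3 \<le> i" using far by arith
  then show ?thesis
  proof cases
    case 1
    then show ?thesis using i j
      unfolding lind_eq[OF N_pos] mmul_hmat0_left[OF i] mmul_hmat0_right[OF j]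
      by (simp add: stationary_state_def) arith
  next
    case 2
    then show ?thesis using i j
      unfolding lind_eq[OF N_pos] mmul_hmat0_left[OF i] mmul_hmat0_right[OF j]
      by (simp add: stationary_state_def) arith
  next
    case 3
    then have "R (i + 1) j = 0" "R (i - 1) j = 0" "R i (j + 1) = 0" "R i (j - 1) = 0" "R i j = 0" "i \<noteq> j"
      by (auto intro!: R0)
    then show ?thesis using i j
      unfolding lind_eq[OF N_pos] mmul_hmat0_left[OF i] mmul_hmat0_right[OF j] by simp
  qed
qed

lemma lind_stationary_state:
  assumes zl: "zl > 0" and boundary: "zr * d N = ainr - c"
  shows "L0 R = (\<lambda>i j. - (complex_of_real (2 * ainl) * proj 1 i j + complex_of_real (2 * ainr) * proj N i j))"
proof (intro ext)
  fix i j
  show "L0 R i j = - (complex_of_real (2 * ainl) * proj 1 i j + complex_of_real (2 * ainr) * proj N i j)"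
  proof (cases "i \<in> {1..N} \<and> j \<in> {1..N}")
    case False
    then show ?thesis unfolding lind_eq[OF N_pos] if_not_P[OF False] proj_def using N by auto
  next
    case True
    then have i: "i \<in> {1..N}" and j: "j \<in> {1..N}" by auto
    define W where "W k = (if k = 1 then zl else 0) + (if k + 1 = N then zr else 0)" for k
    have d_step: "d (k + 1) = d k + c * (beta + W k)" if "1 \<le> k" "k + 1 \<le> N" for k
      using that unfolding stationary_diag_def W_def by (auto simp: algebra_simps)
    have rate_step: "boundary_rate N zl zr k + boundary_rate N zl zr (k + 1) = complex_of_real (W k)"
      if "1 \<le> k" "k + 1 \<le> N" for k
      using that unfolding boundary_rate_def W_def by auto
    consider "i = j" | "j = i + 1" | "i = j + 1" | "i + 2 \<le> j \<or> j + 2 \<le> i"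
      by arith
    then show ?thesis
    proof cases
      case 1
      consider "i = 1" | "i = N" | "2 \<le> i" "i + 1 \<le> N" using i N by fastforce
      then show ?thesis
      proof cases
        case 1
        have "zl * d 1 = ainl + c" unfolding stationary_diag_def using zl N by (simp add: field_simps)
        then have "complex_of_real zl * complex_of_real (d 1) = of_real ainl + of_real c"
          by (simp flip: of_real_mult)
        moreover have "L0 R i i = 2 * of_real c - 2 * (complex_of_real zl * complex_of_real (d 1))"
          using 1 lind_stationary_state_diag[OF i] N by (simp add: boundary_rate_def)
        ultimately show ?thesis using \<open>i = j\<close> 1 N by (simp add: proj_def)
      next
        case 2
        have "complex_of_real zr * complex_of_real (d N) = of_real ainr - of_real c"
          using boundary by (simp flip: of_real_mult)
        moreover have "L0 R i i = - 2 * of_real c - 2 * (complex_of_real zr * complex_of_real (d N))"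
          using 2 lind_stationary_state_diag[OF i] N by (simp add: boundary_rate_def)
        ultimately show ?thesis using \<open>i = j\<close> 2 N by (simp add: proj_def)
      next
        case 3
        then show ?thesis using \<open>i = j\<close> lind_stationary_state_diag[OF i]
          by (simp add: boundary_rate_def proj_def)
      qed
    next
      case 2
      then have k: "1 \<le> i" "i + 1 \<le> N" using i j by auto
      have "L0 R i j = - \<i> * (of_real (d i) - of_real (d i + c * (beta + W i)))
          - (of_real (W i) + of_real beta) * (\<i> * of_real c)"
        unfolding 2 lind_stationary_state_superdiag[OF i k(2)] d_step[OF k] rate_step[OF k] ..
      also have "\<dots> = 0" by (simp add: algebra_simps)
      finally show ?thesis using 2 by (simp add: proj_def)
    next
      case 3
      then have k: "1 \<le> j" "j + 1 \<le> N" using i j by auto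
      have "L0 R i j = - \<i> * (of_real (d j + c * (beta + W j)) - of_real (d j))
          + (of_real (W j) + of_real beta) * (\<i> * of_real c)"
        unfolding 3 lind_stationary_state_subdiag[OF j k(2)] d_step[OF k] rate_step[OF k] ..
      also have "\<dots> = 0" by (simp add: algebra_simps)
      finally show ?thesis using 3 by (simp add: proj_def)
    next
      case 4
      then show ?thesis using lind_stationary_state_far[OF i j] by (auto simp: proj_def)
    qed
  qed
qed

lemma stationary_boundary_condition:
  assumes "zl > 0" "zr > 0" "beta \<ge> 0"
    and c: "c = (zl * ainr - zr * ainl) / (zl + zr + zl * zr * (zl + zr + beta * (real N - 1)))"
  shows "zr * d N = ainr - c"
proof -
  define D where "D = zl + zr + zl * zr * (zl + zr + beta * (real N - 1))"
  have "D > 0" unfolding D_def using assms N by (intro add_pos_nonneg) auto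
  then have "c * D = zl * ainr - zr * ainl" unfolding c D_def[symmetric] by simp
  have "d N = (ainl + c) / zl + c * (beta * (real N - 1) + zl + zr)"
    unfolding stationary_diag_def using N by simp
  then have dN: "zl * d N = ainl + c + zl * c * (beta * (real N - 1) + zl + zr)"
    using \<open>zl > 0\<close> by (simp add: field_simps)
  have "zl * (c + zr * d N) = zl * c + zr * (zl * d N)"
    by (simp add: algebra_simps)
  also have "\<dots> = c * D + zr * ainl"
    unfolding dN D_def by (simp add: algebra_simps)
  also have "\<dots> = zl * ainr" using \<open>c * D = zl * ainr - zr * ainl\<close> by simp
  finally show ?thesis using \<open>zl > 0\<close> by simp
qed

end

theorem theorem3p12:
  fixes N :: nat and v :: "nat \<Rightarrow> real"
    and ainl aoutl ainr aoutr beta :: real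
  assumes "N \<ge> 2"
    and "ainl \<ge> 0" "aoutl \<ge> 0" "ainr \<ge> 0" "aoutr \<ge> 0"
    and "\<forall>n. v n = 0"
    and "beta > 0" and "ainl + aoutl > 0" and "ainr + aoutr > 0"
  shows "current N v ainl aoutl ainr aoutr beta =
    2 * (ainl * aoutr - aoutl * ainr) /
      ((ainl + aoutl) + (ainr + aoutr)
       + (ainl + aoutl) * (ainr + aoutr) * ((ainl + aoutl) + (ainr + aoutr) + beta * (real N - 1)))"
proof -
  define zl where "zl = ainl + aoutl"
  define zr where "zr = ainr + aoutr"
  define D where "D = zl + zr + zl * zr * (zl + zr + beta * (real N - 1))"
  define c where "c = (zl * ainr - zr * ainl) / D"
  define R where "R = stationary_state N zl zr beta ainl c"
  define b where "b = (\<lambda>i j. complex_of_real (2 * ainl) * proj 1 i j + complex_of_real (2 * ainr) * proj N i j)"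
  have v: "v = (\<lambda>_. 0)" using assms(6) by auto
  have "zl > 0" "zr > 0" unfolding zl_def zr_def using assms(8,9) by auto
  interpret dephasing_chain N "\<lambda>_. 0" zl zr beta
    by unfold_locales (use assms \<open>zl > 0\<close> \<open>zr > 0\<close> in auto)
  have "L R = (\<lambda>i j. - b i j)"
    unfolding R_def b_def
    using lind_stationary_state[OF assms(1) \<open>zl > 0\<close> stationary_boundary_condition[OF assms(1) \<open>zl > 0\<close> \<open>zr > 0\<close>]]
      assms(7) c_def D_def by simp
  then have "((\<lambda>s. T s b 2 1) has_integral R 2 1) {0..}"
    using assms(1) by (intro has_integral_semigroup_stationary[OF assms(7)]) auto
  then have "Rinf N v ainl aoutl ainr aoutr beta 2 1 = R 2 1"
    unfolding Rinf_def v zl_def[symmetric] zr_def[symmetric] b_def[symmetric] by (rule integral_unique)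
  moreover have "R 2 1 = - \<i> * complex_of_real c"
    unfolding R_def stationary_state_def using assms(1) by auto
  ultimately have "current N v ainl aoutl ainr aoutr beta = - 2 * c"
    unfolding current_def by simp
  also have "\<dots> = 2 * (ainl * aoutr - aoutl * ainr) / D"
    unfolding c_def zl_def zr_def by (simp add: field_simps)
  finally show ?thesis unfolding D_def zl_def zr_def .
qed

end
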